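(* Let $X$ be a finite-dimensional real Banach space with $\dim X\ge 2$. Then for every $t\in[0,1]$, $S_P(X)\ge \frac{\gamma_X(t)+t^2-3}{2+2t^2}$.
   Context: For a real Banach space $X$ with unit sphere $S_X$, the P-angle constant is $S_P(X)=\sup\left\{\frac{\|x+y\|^2+\|x-y\|^2-4}{2\|x+y\|\,\|x-y\|}: x,y\in S_X,\ x\neq \pm y\right\}$. For $t\in[0,1]$, $\gamma_X(t)=\sup\left\{\frac{\|x+ty\|^2+\|x-ty\|^2}{2}: x,y\in S_X\right\}$. *)

theory Defs
  imports "HOL-Analysis.Analysis"
begin

definition P_angle_const :: "'a::real_normed_vector itself \<Rightarrow> real" where
  "P_angle_const _ = Sup {(norm (x + y)^2 + norm (x - y)^2 - 4) / (2 * norm (x + y) * norm (x - y)) |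
       x y :: 'a. norm x = 1 \<and> norm y = 1 \<and> x \<noteq> y \<and> x \<noteq> - y}"

definition gamma_const :: "'a::real_normed_vector itself \<Rightarrow> real \<Rightarrow> real" where
  "gamma_const _ t = Sup {(norm (x + t *\<^sub>R y)^2 + norm (x - t *\<^sub>R y)^2) / 2 |
       x y :: 'a. norm x = 1 \<and> norm y = 1}"

end

theory Submission
  imports Defs
begin

text \<open>For unit vectors x, y put s = (\<parallel>x + y\<parallel>^2 + \<parallel>x - y\<parallel>^2) / 2 \<le> 4. Since
  x \<plusminus> t y = (1 - t) x + t (x \<plusminus> y), the triangle inequality and convexity of squaring bound the
  term of \<gamma>_X(t) by 1 - t + t s, while AM-GM bounds the P-angle ratio of x, y below by
  (s - 2) / s. For s > 2 an elementary inequality in s and t links the two bounds; for s \<le> 2 the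
  claim reduces to S_P(X) \<ge> 0. That holds in dimension at least 2: the intermediate value theorem
  gives unit vectors with \<parallel>x + y\<parallel> = \<parallel>x - y\<parallel> = a, and either this pair or the unit pair
  (x + y) / a, (x - y) / a has nonnegative ratio.\<close>

lemma norm_add_diff_unit_le_2:
  fixes x y :: "'a::real_normed_vector"
  assumes "norm x = 1" "norm y = 1"
  shows "norm (x + y) \<le> 2" and "norm (x - y) \<le> 2"
  using norm_triangle_ineq[of x y] norm_triangle_ineq4[of x y] assms by simp_all

lemma sum_squares_minus_4_le_mult:
  fixes a b :: real
  assumes "0 \<le> a" "a \<le> 2" "0 \<le> b" "b \<le> 2"
  shows "a^2 + b^2 - 4 \<le> a * b"
proof -
  have "0 \<le> a * (2 - a) + b * (2 - b) + (2 - a) * (2 - b)"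
    using assms by simp
  then show ?thesis by (simp add: algebra_simps power2_eq_square)
qed

lemma P_angle_ratio_le_half:
  fixes x y :: "'a::real_normed_vector"
  assumes "norm x = 1" "norm y = 1"
  shows "(norm (x + y)^2 + norm (x - y)^2 - 4) / (2 * norm (x + y) * norm (x - y)) \<le> 1/2"
proof (cases "norm (x + y) = 0 \<or> norm (x - y) = 0")
  case False
  have "norm (x + y)^2 + norm (x - y)^2 - 4 \<le> norm (x + y) * norm (x - y)"
    using norm_add_diff_unit_le_2[OF assms] by (intro sum_squares_minus_4_le_mult) auto
  with False show ?thesis by (simp add: divide_simps)
qed auto

lemma P_angle_const_ge:
  fixes x y :: "'a::real_normed_vector"
  assumes "norm x = 1" "norm y = 1" "x \<noteq> y" "x \<noteq> - y"
  shows "(norm (x + y)^2 + norm (x - y)^2 - 4) / (2 * norm (x + y) * norm (x - y))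
      \<le> P_angle_const TYPE('a)"
  unfolding P_angle_const_def
proof (rule cSup_upper)
  show "bdd_above {(norm (x + y)^2 + norm (x - y)^2 - 4) / (2 * norm (x + y) * norm (x - y)) |
       x y :: 'a. norm x = 1 \<and> norm y = 1 \<and> x \<noteq> y \<and> x \<noteq> - y}"
    by (rule bdd_aboveI[where M = "1/2"]) (blast intro: P_angle_ratio_le_half)
qed (use assms in blast)

lemma P_angle_ratio_isosceles:
  fixes x y :: "'a::real_normed_vector"
  assumes "norm (x + y) = c" "norm (x - y) = c"
  shows "(norm (x + y)^2 + norm (x - y)^2 - 4) / (2 * norm (x + y) * norm (x - y))
      = (c^2 - 2) / c^2"
  using assms by (cases "c = 0") (simp_all add: power2_eq_square field_simps)

lemma exists_not_in_span_singleton: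
  assumes "2 \<le> dim (UNIV :: 'a::real_normed_vector set)"
  shows "\<exists>z::'a. z \<notin> span {x}"
proof (rule ccontr)
  assume "\<not> ?thesis"
  then have "dim (UNIV :: 'a set) \<le> card {x}"
    by (intro dim_le_card) auto
  then show False using assms by simp
qed

lemma exists_unit_isosceles_orthogonal:
  fixes x z :: "'a::real_normed_vector"
  assumes x: "norm x = 1" and z: "z \<notin> span {x}"
  shows "\<exists>y. norm y = 1 \<and> norm (x + y) = norm (x - y)"
proof -
  define w where "w s = s *\<^sub>R x + (1 - s^2) *\<^sub>R z" for s :: real
  have w_nonzero: "w s \<noteq> 0" if "-1 \<le> s" "s \<le> 1" for s
  proof
    assume w0: "w s = 0"
    show False
    proof (cases "s^2 = 1")
      case True
      then have "s = 1 \<or> s = -1" by (simp add: power2_eq_1_iff)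
      then show False using w0 x by (auto simp: w_def)
    next
      case False
      have "(1 - s^2) *\<^sub>R z = - (s *\<^sub>R x)"
        using w0 by (simp add: w_def add_eq_0_iff2)
      then have "(1 - s^2) *\<^sub>R z \<in> span {x}"
        by (simp add: span_base span_scale span_neg del: scaleR_minus_left)
      then have "(1 / (1 - s^2)) *\<^sub>R ((1 - s^2) *\<^sub>R z) \<in> span {x}"
        by (rule span_scale)
      then show False using False z by simp
    qed
  qed
  define y where "y s = (1 / norm (w s)) *\<^sub>R w s" for s
  define \<phi> where "\<phi> s = norm (x + y s) - norm (x - y s)" for s
  have "continuous_on {-1..1} \<phi>"
    unfolding \<phi>_def y_def using w_nonzero unfolding w_def
    by (intro continuous_intros) auto
  moreover have "\<phi> (-1) \<le> 0" "0 \<le> \<phi> 1"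
    using x by (simp_all add: \<phi>_def y_def w_def)
  ultimately obtain s where s: "-1 \<le> s" "s \<le> 1" "\<phi> s = 0"
    using IVT'[of \<phi> "-1" 0 1] by auto
  have "norm (y s) = 1" using w_nonzero[OF s(1,2)] by (simp add: y_def)
  then show ?thesis using s(3) by (auto simp: \<phi>_def)
qed

lemma exists_unit_isosceles_orthogonal_pair:
  assumes "2 \<le> dim (UNIV :: 'a::real_normed_vector set)"
  obtains x y :: "'a::real_normed_vector"
  where "norm x = 1" "norm y = 1" "norm (x + y) = norm (x - y)"
proof -
  obtain e :: 'a where "e \<notin> span {0}"
    using exists_not_in_span_singleton[OF assms] by blast
  then have "e \<noteq> 0" by auto
  define x where "x = (1 / norm e) *\<^sub>R e"
  have x: "norm x = 1" using \<open>e \<noteq> 0\<close> by (simp add: x_def)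
  obtain z where "z \<notin> span {x}"
    using exists_not_in_span_singleton[OF assms] by blast
  with x that show ?thesis
    using exists_unit_isosceles_orthogonal by blast
qed

lemma P_angle_const_nonneg:
  assumes "2 \<le> dim (UNIV :: 'a::real_normed_vector set)"
  shows "0 \<le> P_angle_const TYPE('a)"
proof -
  obtain x y :: 'a where x: "norm x = 1" and y: "norm y = 1"
    and iso: "norm (x + y) = norm (x - y)"
    using exists_unit_isosceles_orthogonal_pair[OF assms] by blast
  define a where "a = norm (x + y)"
  have xy: "norm (x + y) = a" "norm (x - y) = a" using iso by (simp_all add: a_def)
  have "a \<noteq> 0"
  proof
    assume "a = 0"
    then have "x + y = 0" "x - y = 0" using xy by simp_all
    moreover have "2 *\<^sub>R x = (x + y) + (x - y)" by (simp add: scaleR_2)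
    ultimately have "x = 0" by simp
    then show False using x by simp
  qed
  then have a_pos: "0 < a" using xy(1) by auto
  define u where "u = (1 / a) *\<^sub>R (x + y)"
  define v where "v = (1 / a) *\<^sub>R (x - y)"
  have u: "norm u = 1" and v: "norm v = 1"
    using a_pos xy by (simp_all add: u_def v_def)
  have "u + v = (1 / a) *\<^sub>R (2 *\<^sub>R x)" "u - v = (1 / a) *\<^sub>R (2 *\<^sub>R y)"
    unfolding u_def v_def scaleR_2 by (simp_all add: algebra_simps)
  then have uv: "norm (u + v) = 2 / a" "norm (u - v) = 2 / a"
    using a_pos x y by simp_all
  show ?thesis
  proof (cases "2 \<le> a^2")
    case True
    have "x \<noteq> y" "x \<noteq> - y" using a_pos xy by auto
    moreover have "0 \<le> (a^2 - 2) / a^2" using True by simp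
    ultimately show ?thesis
      using P_angle_const_ge[OF x y] P_angle_ratio_isosceles[OF xy] by linarith
  next
    case False
    have "u \<noteq> v" "u \<noteq> - v" using uv a_pos by auto
    moreover have "0 \<le> ((2 / a)^2 - 2) / (2 / a)^2"
      using False a_pos by (simp add: field_simps power2_eq_square)
    ultimately show ?thesis
      using P_angle_const_ge[OF u v] P_angle_ratio_isosceles[OF uv] by linarith
  qed
qed

lemma square_affine_le_affine_square:
  fixes a t :: real
  assumes "0 \<le> t" "t \<le> 1"
  shows "((1 - t) + t * a)^2 \<le> (1 - t) + t * a^2"
proof -
  have "(1 - t) + t * a^2 - ((1 - t) + t * a)^2 = t * (1 - t) * (a - 1)^2"
    by (simp add: algebra_simps power2_eq_square)
  moreover have "0 \<le> t * (1 - t) * (a - 1)^2" using assms by simp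
  ultimately show ?thesis by linarith
qed

lemma norm_unit_affine_square_le:
  fixes x w :: "'a::real_normed_vector"
  assumes "norm x = 1" "0 \<le> t" "t \<le> 1"
  shows "norm ((1 - t) *\<^sub>R x + t *\<^sub>R w)^2 \<le> (1 - t) + t * norm w^2"
proof -
  have "norm ((1 - t) *\<^sub>R x + t *\<^sub>R w) \<le> (1 - t) + t * norm w"
    using norm_triangle_ineq[of "(1 - t) *\<^sub>R x" "t *\<^sub>R w"] assms by simp
  then have "norm ((1 - t) *\<^sub>R x + t *\<^sub>R w)^2 \<le> ((1 - t) + t * norm w)^2"
    by (simp add: power_mono)
  also have "\<dots> \<le> (1 - t) + t * norm w^2"
    using square_affine_le_affine_square assms(2,3) .
  finally show ?thesis .
qed

lemma gamma_term_le:
  fixes x y :: "'a::real_normed_vector"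
  assumes "norm x = 1" "0 \<le> t" "t \<le> 1"
  shows "(norm (x + t *\<^sub>R y)^2 + norm (x - t *\<^sub>R y)^2) / 2
      \<le> (1 - t) + t * ((norm (x + y)^2 + norm (x - y)^2) / 2)"
proof -
  have "x + t *\<^sub>R y = (1 - t) *\<^sub>R x + t *\<^sub>R (x + y)"
    and "x - t *\<^sub>R y = (1 - t) *\<^sub>R x + t *\<^sub>R (x - y)"
    by (simp_all add: algebra_simps)
  then show ?thesis
    using norm_unit_affine_square_le[OF assms, of "x + y"]
      norm_unit_affine_square_le[OF assms, of "x - y"]
    by (simp add: field_simps)
qed

lemma P_angle_const_ge_mean_square:
  fixes x y :: "'a::real_normed_vector"
  assumes x: "norm x = 1" and y: "norm y = 1"
    and s: "s = (norm (x + y)^2 + norm (x - y)^2) / 2" and "2 < s"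
  shows "(s - 2) / s \<le> P_angle_const TYPE('a)"
proof -
  define a where "a = norm (x + y)"
  define b where "b = norm (x - y)"
  have "norm (x + x) = 2" "norm (x - - x) = 2"
    using x by (simp_all flip: scaleR_2)
  then have "x \<noteq> y" "x \<noteq> - y"
    using \<open>2 < s\<close> by (auto simp: s)
  then have "0 < a" "0 < b" by (auto simp: a_def b_def add_eq_0_iff2)
  have "a * b \<le> s"
    using sum_squares_bound[of a b] by (simp add: s a_def b_def power2_eq_square field_simps)
  have "(s - 2) / s = (2 * s - 4) / (2 * s)" using \<open>2 < s\<close> by (simp add: field_simps)
  also have "\<dots> \<le> (2 * s - 4) / (2 * a * b)"
    using \<open>2 < s\<close> \<open>a * b \<le> s\<close> \<open>0 < a\<close> \<open>0 < b\<close> by (intro divide_left_mono) auto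
  also have "\<dots> = (norm (x + y)^2 + norm (x - y)^2 - 4) / (2 * norm (x + y) * norm (x - y))"
    by (simp add: s a_def b_def)
  also have "\<dots> \<le> P_angle_const TYPE('a)"
    using P_angle_const_ge[OF x y \<open>x \<noteq> y\<close> \<open>x \<noteq> - y\<close>] .
  finally show ?thesis .
qed

lemma affine_bound_le_of_ratio_bound:
  fixes s t P :: real
  assumes t: "0 \<le> t" "t \<le> 1" and "0 \<le> P" "s \<le> 4"
    and ratio: "2 < s \<Longrightarrow> (s - 2) / s \<le> P"
  shows "(1 - t) + t * s + t^2 - 3 \<le> P * (2 + 2 * t^2)"
proof (cases "s \<le> 2")
  case True
  have "t * s \<le> t * 2" "t^2 \<le> t"
    using True t by (simp_all add: mult_left_mono power2_eq_square mult_left_le)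
  moreover have "0 \<le> P * (2 + 2 * t^2)" using \<open>0 \<le> P\<close> by simp
  ultimately show ?thesis using t by linarith
next
  case False
  \<comment> \<open>(1 - t + t s + t^2 - 3) s - (s - 2) (2 + 2 t^2) is the sum of the two products below.\<close>
  have "t * (s - 2) * (s - 4) \<le> 0"
    using False t \<open>s \<le> 4\<close> by (simp add: mult_nonneg_nonpos)
  moreover have "s * (t - 4) \<le> 2 * (t - 4)"
    using False t by (intro mult_right_mono_neg) auto
  then have "(1 - t) * (s * (t - 4) + 4 - 4 * t) \<le> 0"
    using t by (intro mult_nonneg_nonpos) auto
  ultimately have "((1 - t) + t * s + t^2 - 3) * s \<le> (s - 2) * (2 + 2 * t^2)"
    by (simp add: algebra_simps power2_eq_square)
  also have "\<dots> \<le> (P * s) * (2 + 2 * t^2)"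
    using ratio False by (intro mult_right_mono) (auto simp: divide_le_eq)
  finally have "((1 - t) + t * s + t^2 - 3) * s \<le> (P * (2 + 2 * t^2)) * s"
    by (simp only: mult_ac)
  then show ?thesis using False by (simp add: mult_le_cancel_right)
qed

lemma gamma_term_le_P_angle_const:
  fixes x y :: "'a::real_normed_vector"
  assumes x: "norm x = 1" and y: "norm y = 1" and t: "0 \<le> t" "t \<le> 1"
    and "0 \<le> P_angle_const TYPE('a)"
  shows "(norm (x + t *\<^sub>R y)^2 + norm (x - t *\<^sub>R y)^2) / 2
      \<le> P_angle_const TYPE('a) * (2 + 2 * t^2) + 3 - t^2"
proof -
  define s where "s = (norm (x + y)^2 + norm (x - y)^2) / 2"
  have "norm (x + y)^2 \<le> 2^2" "norm (x - y)^2 \<le> 2^2"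
    using norm_add_diff_unit_le_2[OF x y] by (simp_all only: power_mono norm_ge_zero)
  then have "s \<le> 4" by (simp add: s_def)
  then have "(1 - t) + t * s + t^2 - 3 \<le> P_angle_const TYPE('a) * (2 + 2 * t^2)"
    using P_angle_const_ge_mean_square[OF x y s_def]
    by (intro affine_bound_le_of_ratio_bound[OF t \<open>0 \<le> P_angle_const TYPE('a)\<close>])
  then show ?thesis using gamma_term_le[OF x t, of y] by (simp add: s_def)
qed

theorem corollary4p6:
  assumes fin: "\<exists>B::'a::banach set. finite B \<and> span B = UNIV"
    and dim2: "dim (UNIV :: 'a set) \<ge> 2"
    and t: "0 \<le> t" "t \<le> (1::real)"
  shows "P_angle_const TYPE('a) \<ge> (gamma_const TYPE('a) t + t^2 - 3) / (2 + 2 * t^2)"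
proof -
  obtain x0 :: 'a where "norm x0 = 1"
    using exists_unit_isosceles_orthogonal_pair[OF dim2] by blast
  have "gamma_const TYPE('a) t \<le> P_angle_const TYPE('a) * (2 + 2 * t^2) + 3 - t^2"
    unfolding gamma_const_def
  proof (rule cSup_least)
    show "{(norm (x + t *\<^sub>R y)^2 + norm (x - t *\<^sub>R y)^2) / 2 | x y :: 'a.
        norm x = 1 \<and> norm y = 1} \<noteq> {}"
      using \<open>norm x0 = 1\<close> by blast
  next
    fix A assume "A \<in> {(norm (x + t *\<^sub>R y)^2 + norm (x - t *\<^sub>R y)^2) / 2 | x y :: 'a.
        norm x = 1 \<and> norm y = 1}"
    then show "A \<le> P_angle_const TYPE('a) * (2 + 2 * t^2) + 3 - t^2"
      using gamma_term_le_P_angle_const[OF _ _ t P_angle_const_nonneg[OF dim2]] by blast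
  qed
  moreover have "0 < 2 + 2 * t^2" by (simp add: add_pos_nonneg)
  ultimately show ?thesis by (simp add: divide_le_eq)
qed

end
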